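(* Let $S=(0,1)$. Let $\{\lambda_n\}_{n\geq 1}$ be i.i.d. random variables, each uniformly distributed on $(3.87,4)$, and let $X_0$ be an $S$-valued random variable independent of the $\lambda_n$'s. Define the Markov process $X_{n+1}=\lambda_{n+1}X_n(1-X_n)$ for $n\geq 0$, with one-step transition probability $p(x,A)=\mathrm{Prob}(X_1\in A\mid X_0=x)=\mathrm{Prob}(\lambda_1 x(1-x)\in A)$. Let $\lambda_{\min}=3.87$, let $A_0=\left(1-\frac{1}{\lambda_{\min}},\,1-\frac14\right)$, and let $\phi$ be normalized Lebesgue measure on $A_0$, i.e. $\phi(A)=\frac{1}{|A_0|}\,\mathrm{Leb}(A\cap A_0)$ for measurable $A$, where $|A_0|$ is the length of $A_0$. Then there exists $c>0$ such that for all $x\in A_0$ and all measurable $A\subset(0,1)$, $p(x,A)\geq c\,\phi(A)$.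
   Context: $A_0$ is the set of fixed points $1-1/\lambda$ of the deterministic logistic maps $x\mapsto \lambda x(1-x)$ for $\lambda\in(3.87,4)$. *)

theory Defs
  imports "HOL-Probability.Probability"
begin

definition lambda_min :: real where "lambda_min = 3.87"
definition lambda_max :: real where "lambda_max = 4"

definition lam_dist :: "real measure" where
  "lam_dist = uniform_measure lborel {lambda_min<..<lambda_max}"

definition trans_prob :: "real \<Rightarrow> real set \<Rightarrow> real" where
  "trans_prob x A = measure lam_dist {l. l * x * (1 - x) \<in> A}"

definition A0 :: "real set" where
  "A0 = {1 - 1 / lambda_min <..< 1 - 1 / 4}"

definition phi :: "real set \<Rightarrow> real" where
  "phi A = measure lborel (A \<inter> A0) / measure lborel A0"

end

theory Submission
  imports Defs
begin

text \<open>For x \<in> A0 put q = x(1 - x). Then lambda_min q \<le> inf A0 and 4 q \<ge> sup A0, so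
  every point of A0 is reached as \<lambda> q for some admissible \<lambda>. Hence
  p(x, A) \<ge> Prob(\<lambda> q \<in> A \<inter> A0) = |A \<inter> A0| / (q (4 - lambda_min)) \<ge> |A \<inter> A0|,
  the last step because q \<le> 1/4. So c = |A0| works.\<close>

lemma measure_lborel_vimage_scale:
  fixes q :: real
  assumes "q > 0" and "B \<in> sets borel"
  shows "measure lborel {l. l * q \<in> B} = measure lborel B / q"
proof -
  have "measure lborel {l. l * q \<in> B} = measure (distr lborel borel ((*) q)) B"
    using assms(2) by (subst measure_distr) (auto simp: mult.commute vimage_def)
  also have "\<dots> = measure (density lborel (\<lambda>_. ennreal (inverse \<bar>q\<bar>))) B"
    using assms(1) by (subst lborel_distr_mult) auto
  also have "\<dots> = inverse q * measure lborel B"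
    using assms by (subst measure_density_const) auto
  finally show ?thesis
    by (simp add: field_simps)
qed

lemma measure_uniform_measure_interval:
  fixes a b :: real
  assumes "a < b" and "T \<in> sets borel" and "T \<subseteq> {a<..<b}"
  shows "measure (uniform_measure lborel {a<..<b}) T = measure lborel T / (b - a)"
  using assms by (subst measure_uniform_measure) (auto simp: Int_absorb1)

lemma logistic_A0_scale_bounds:
  assumes "x \<in> A0"
  shows "0 < x * (1 - x)" and "x * (1 - x) \<le> 1 / 4"
    and "lambda_min * (x * (1 - x)) \<le> 1 - 1 / lambda_min"
    and "3 / 4 \<le> lambda_max * (x * (1 - x))"
proof -
  have x: "1 - 1 / 3.87 < x" "x < 3 / 4"
    using assms by (auto simp: A0_def lambda_min_def)
  show "0 < x * (1 - x)"
    using x by simp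
  have "0 \<le> (x - 1 / 2)\<^sup>2"
    by simp
  then show "x * (1 - x) \<le> 1 / 4"
    by (simp add: algebra_simps power2_eq_square)
  txt \<open>1 - 1/lambda_min and 3/4 both exceed 1/2, so on A0 the parabola
    lies between its values at these two points.\<close>
  have "(x - (1 - 1 / 3.87)) * (1 - x - (1 - 1 / 3.87)) \<le> 0"
    using x by (intro mult_nonneg_nonpos) auto
  then show "lambda_min * (x * (1 - x)) \<le> 1 - 1 / lambda_min"
    by (simp add: field_simps lambda_min_def)
  have "0 \<le> (2 * x - 1 / 2) * (3 / 2 - 2 * x)"
    using x by (intro mult_nonneg_nonneg) auto
  then show "3 / 4 \<le> lambda_max * (x * (1 - x))"
    by (simp add: algebra_simps lambda_max_def)
qed

lemma logistic_parameters_into_A0: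
  assumes "x \<in> A0"
  shows "{l. l * (x * (1 - x)) \<in> A0} \<subseteq> {lambda_min<..<lambda_max}"
proof
  fix l
  assume "l \<in> {l. l * (x * (1 - x)) \<in> A0}"
  then have "lambda_min * (x * (1 - x)) < l * (x * (1 - x))"
    and "l * (x * (1 - x)) < lambda_max * (x * (1 - x))"
    using logistic_A0_scale_bounds[OF assms] by (auto simp: A0_def)
  then show "l \<in> {lambda_min<..<lambda_max}"
    using logistic_A0_scale_bounds(1)[OF assms] by (simp add: mult_less_cancel_right)
qed

theorem mainTheorem2:
  shows "\<exists>c>0. \<forall>x\<in>A0. \<forall>A\<in>sets borel. A \<subseteq> {0<..<1} \<longrightarrow>
           trans_prob x A \<ge> c * phi A"
proof (intro exI[of _ "measure lborel A0"] conjI ballI impI)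
  show "measure lborel A0 > 0"
    by (simp add: A0_def lambda_min_def)
  fix x and A :: "real set"
  assume x: "x \<in> A0" and A: "A \<in> sets borel"
  define q where "q = x * (1 - x)"
  define B where "B = A \<inter> A0"
  have B: "B \<in> sets borel"
    using A by (simp add: B_def A0_def)
  have q: "0 < q" "0 < q * (lambda_max - lambda_min)" "q * (lambda_max - lambda_min) \<le> 1"
    using logistic_A0_scale_bounds[OF x] by (simp_all add: q_def lambda_max_def lambda_min_def)
  have "measure lborel A0 * phi A = measure lborel B"
    by (simp add: phi_def B_def A0_def lambda_min_def)
  also have "\<dots> \<le> measure lborel B / (q * (lambda_max - lambda_min))"
    using q(2,3) by (simp add: le_divide_eq mult_left_le)
  also have "\<dots> = measure lborel {l. l * q \<in> B} / (lambda_max - lambda_min)"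
    using q(1) B by (simp add: measure_lborel_vimage_scale)
  also have "\<dots> = measure lam_dist {l. l * q \<in> B}"
  proof -
    have "{l. l * q \<in> B} \<in> sets borel"
      using B by measurable
    moreover have "{l. l * q \<in> B} \<subseteq> {lambda_min<..<lambda_max}"
      using logistic_parameters_into_A0[OF x] by (auto simp: B_def q_def)
    ultimately show ?thesis
      unfolding lam_dist_def
      by (subst measure_uniform_measure_interval) (auto simp: lambda_min_def lambda_max_def)
  qed
  also have "\<dots> \<le> trans_prob x A"
    unfolding trans_prob_def lam_dist_def
    using A
    by (intro finite_measure.finite_measure_mono prob_space.finite_measure
          prob_space_uniform_measure)
       (auto simp: B_def q_def mult.assoc lambda_min_def lambda_max_def)
  finally show "trans_prob x A \<ge> measure lborel A0 * phi A" .
qed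

end
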